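(* Let $V=\mathbb C^n$ with $n$ even and consider the rational map $\phi:\mathbb P(\Lambda^2V)\times\mathbb P(\Lambda^2V)\dashrightarrow\mathbb P(S^2V)$, $([A],[B])\mapsto[AJB-BJA]$. (a) If $n=2$, then $AJB-BJA=0$ for all $A,B\in\Lambda^2V$, so $\phi$ is nowhere defined. (b) If $n=4$, the image of $\phi$ in $\mathbb P^9=\mathbb P(S^2\mathbb C^4)$ is a Grassmannian $\mathbb G(2,5)$, i.e. a subvariety projectively equivalent to the Plücker embedding of the Grassmannian of $2$-planes in $\mathbb C^5$ in $\mathbb P(\Lambda^2\mathbb C^5)\cong\mathbb P^9$.
   Context: $\Lambda^2V$ and $S^2V$ denote skew-symmetric and symmetric $n\times n$ complex matrices, $n=2p$, and $J=\begin{bmatrix}0&I_p\\-I_p&0\end{bmatrix}$. *)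

theory Defs
  imports "HOL-Analysis.Analysis" "HOL-Library.Numeral_Type"
begin

text \<open>Index k (1 \<le> k \<le> n) of an n x n matrix, realised in the numeral type of size n.\<close>
definition ix :: "nat \<Rightarrow> 'n::{finite,semiring_1}" where
  "ix k = of_nat (k - 1)"

text \<open>The standard symplectic matrix J = [[0, I_p], [-I_p, 0]] of size n = 2p.\<close>
definition Jmat :: "nat \<Rightarrow> ((complex, 'n::{finite,semiring_1}) vec, 'n) vec" where
  "Jmat p = (\<chi> i j. if (\<exists>k\<in>{1..p}. i = ix k \<and> j = ix (k + p)) then 1
                   else if (\<exists>k\<in>{1..p}. i = ix (k + p) \<and> j = ix k) then -1 else 0)"

definition skew :: "complex^'n^'n \<Rightarrow> bool" where
  "skew A \<longleftrightarrow> transpose A = - A"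

definition symm :: "complex^'n^'n \<Rightarrow> bool" where
  "symm A \<longleftrightarrow> transpose A = A"

definition cscale :: "complex \<Rightarrow> complex^'n^'m \<Rightarrow> complex^'n^'m" where
  "cscale c M = (\<chi> i j. c * M $ i $ j)"

definition clin :: "(complex^'n^'m \<Rightarrow> complex^'p^'q) \<Rightarrow> bool" where
  "clin L \<longleftrightarrow> (\<forall>M N. L (M + N) = L M + L N) \<and> (\<forall>c M. L (cscale c M) = cscale c (L M))"

definition phi :: "nat \<Rightarrow> ((complex, 'n::{finite,semiring_1}) vec, 'n) vec \<Rightarrow> ((complex, 'n) vec, 'n) vec \<Rightarrow> ((complex, 'n) vec, 'n) vec" where
  "phi p A B = A ** Jmat p ** B - B ** Jmat p ** A"

text \<open>Decomposable bivectors u \<and> v in \<Lambda>^2 C^5, viewed as skew 5x5 matrices u v^T - v u^T: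
  the affine cone over the Pluecker-embedded Grassmannian G(2,5).\<close>
definition wedge :: "complex^'n \<Rightarrow> complex^'n \<Rightarrow> complex^'n^'n" where
  "wedge u v = (\<chi> i j. u $ i * v $ j - v $ i * u $ j)"

end

theory Submission
  imports Defs
begin

text \<open>
  For \<open>n = 2\<close> the space of skew matrices is the line spanned by \<open>J\<close>, and for proportional
  \<open>A, B\<close> the expression \<open>AJB - BJA\<close> cancels.

  For \<open>n = 4\<close>, note \<open>(AJB - BJA)J = [AJ, BJ]\<close>, so \<open>\<phi>\<close> is the Lie bracket of \<open>sp(4)\<close> transported
  back by \<open>S \<mapsto> SJ\<close>; it vanishes as soon as one argument is a multiple of \<open>J\<close>. Hence \<open>\<phi>\<close> factors
  through \<open>\<Lambda>\<^sup>2W\<close>, where \<open>W = \<Lambda>\<^sup>2\<complex>\<^sup>4/\<complex>J\<close> is 5-dimensional with the Pfaffian quadratic form, and by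
  \<open>Sp(4) \<cong> Spin(5)\<close> the resulting map \<open>\<Lambda>\<^sup>2W \<rightarrow> S\<^sup>2\<complex>\<^sup>4 \<cong> sp(4) \<cong> so(W)\<close> is an isomorphism. In coordinates:
  a linear projection \<open>P : \<Lambda>\<^sup>2\<complex>\<^sup>4 \<rightarrow> \<complex>\<^sup>5\<close> with kernel \<open>\<complex>J\<close> and a linear isomorphism
  \<open>L : S\<^sup>2\<complex>\<^sup>4 \<rightarrow> \<Lambda>\<^sup>2\<complex>\<^sup>5\<close> satisfy \<open>L(AJB - BJA) = P A \<and> P B\<close>, and since \<open>P\<close> is onto, the image of
  \<open>\<phi>\<close> is the cone of decomposable bivectors.
\<close>

lemma exhaust_2_from_0: fixes x :: 2 shows "x = 0 \<or> x = 1"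
proof (induct x)
  case (of_int z)
  then have "z = 0 \<or> z = 1" by fastforce
  then show ?case by auto
qed

lemma exhaust_4_from_0: fixes x :: 4 shows "x = 0 \<or> x = 1 \<or> x = 2 \<or> x = 3"
proof (induct x)
  case (of_int z)
  then have "z = 0 \<or> z = 1 \<or> z = 2 \<or> z = 3" by fastforce
  then show ?case by auto
qed

lemma exhaust_5_from_0: fixes x :: 5 shows "x = 0 \<or> x = 1 \<or> x = 2 \<or> x = 3 \<or> x = 4"
proof (induct x)
  case (of_int z)
  then have "z = 0 \<or> z = 1 \<or> z = 2 \<or> z = 3 \<or> z = 4" by fastforce
  then show ?case by auto
qed

lemma forall_2_from_0: "(\<forall>i::2. P i) \<longleftrightarrow> P 0 \<and> P 1"
  by (metis exhaust_2_from_0)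

lemma forall_4_from_0: "(\<forall>i::4. P i) \<longleftrightarrow> P 0 \<and> P 1 \<and> P 2 \<and> P 3"
  by (metis exhaust_4_from_0)

lemma forall_5_from_0: "(\<forall>i::5. P i) \<longleftrightarrow> P 0 \<and> P 1 \<and> P 2 \<and> P 3 \<and> P 4"
  by (metis exhaust_5_from_0)

lemma sum_4_from_0: "sum f (UNIV::4 set) = f 0 + f 1 + f 2 + f 3"
proof -
  have UNIV_4: "UNIV = {0, 1, 2, 3::4}"
    using exhaust_4_from_0 by auto
  show ?thesis
    unfolding UNIV_4 by (simp add: ac_simps)
qed

lemma skew_entry:
  assumes "skew A"
  shows "A $ i $ j = - A $ j $ i"
proof -
  have "transpose A $ j $ i = (- A) $ j $ i"
    using assms unfolding skew_def by simp
  then show ?thesis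
    by (simp add: transpose_def)
qed

lemma skew_diag: "skew A \<Longrightarrow> A $ i $ i = (0::complex)"
  using skew_entry[of A i i] by simp

lemma symm_entry:
  assumes "symm A"
  shows "A $ i $ j = A $ j $ i"
proof -
  have "transpose A $ j $ i = A $ j $ i"
    using assms unfolding symm_def by simp
  then show ?thesis
    by (simp add: transpose_def)
qed

lemma skew2_entries:
  assumes "skew (A::complex^2^2)"
  shows "A$0$0 = 0" "A$1$1 = 0" "A$1$0 = - A$0$1"
  using assms skew_entry[OF assms, of 1 0] by (simp_all add: skew_diag)

lemma skew4_entries:
  assumes "skew (A::complex^4^4)"
  shows "A$0$0 = 0" "A$1$1 = 0" "A$2$2 = 0" "A$3$3 = 0"
    "A$1$0 = - A$0$1" "A$2$0 = - A$0$2" "A$3$0 = - A$0$3"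
    "A$2$1 = - A$1$2" "A$3$1 = - A$1$3" "A$3$2 = - A$2$3"
  using assms skew_entry[OF assms, of 1 0] skew_entry[OF assms, of 2 0] skew_entry[OF assms, of 3 0]
    skew_entry[OF assms, of 2 1] skew_entry[OF assms, of 3 1] skew_entry[OF assms, of 3 2]
  by (simp_all add: skew_diag)

lemma skew5_entries:
  assumes "skew (A::complex^5^5)"
  shows "A$0$0 = 0" "A$1$1 = 0" "A$2$2 = 0" "A$3$3 = 0" "A$4$4 = 0"
    "A$1$0 = - A$0$1" "A$2$0 = - A$0$2" "A$3$0 = - A$0$3" "A$4$0 = - A$0$4"
    "A$2$1 = - A$1$2" "A$3$1 = - A$1$3" "A$4$1 = - A$1$4"
    "A$3$2 = - A$2$3" "A$4$2 = - A$2$4" "A$4$3 = - A$3$4"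
  using assms skew_entry[OF assms, of 1 0] skew_entry[OF assms, of 2 0] skew_entry[OF assms, of 3 0]
    skew_entry[OF assms, of 4 0] skew_entry[OF assms, of 2 1] skew_entry[OF assms, of 3 1]
    skew_entry[OF assms, of 4 1] skew_entry[OF assms, of 3 2] skew_entry[OF assms, of 4 2]
    skew_entry[OF assms, of 4 3]
  by (simp_all add: skew_diag)

lemma symm4_entries:
  assumes "symm (A::complex^4^4)"
  shows "A$1$0 = A$0$1" "A$2$0 = A$0$2" "A$3$0 = A$0$3"
    "A$2$1 = A$1$2" "A$3$1 = A$1$3" "A$3$2 = A$2$3"
  using symm_entry[OF assms] by simp_all

lemma Jmat_1_eq:
  "(Jmat 1 :: complex^2^2) = (\<chi> i j. if i = 0 \<and> j = 1 then 1 else if i = 1 \<and> j = 0 then -1 else 0)"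
  unfolding Jmat_def ix_def by (simp add: vec_eq_iff forall_2_from_0)

lemma Jmat_2_eq:
  "(Jmat 2 :: complex^4^4) = (\<chi> i j. if i = 0 \<and> j = 2 \<or> i = 1 \<and> j = 3 then 1
                                  else if i = 2 \<and> j = 0 \<or> i = 3 \<and> j = 1 then -1 else 0)"
proof -
  have "{1..2::nat} = {1, 2}" by auto
  then show ?thesis
    unfolding Jmat_def ix_def by (simp add: vec_eq_iff forall_4_from_0)
qed

lemma cscale_matrix_mult_left: "cscale c M ** N = cscale c (M ** N)"
  by (simp add: cscale_def matrix_matrix_mult_def vec_eq_iff sum_distrib_left mult.assoc)

lemma cscale_matrix_mult_right: "M ** cscale c N = cscale c (M ** N)"
  by (simp add: cscale_def matrix_matrix_mult_def vec_eq_iff sum_distrib_left mult.left_commute)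

lemma phi_cscale_cscale: "phi p (cscale a M) (cscale b M) = 0"
  by (simp add: phi_def cscale_matrix_mult_left cscale_matrix_mult_right)
     (simp add: cscale_def vec_eq_iff mult.commute)

lemma skew2_eq_cscale_Jmat: "skew (A::complex^2^2) \<Longrightarrow> A = cscale (A$0$1) (Jmat 1)"
  unfolding Jmat_1_eq by (simp add: cscale_def vec_eq_iff forall_2_from_0 skew2_entries)

lemma phi_1_skew_eq_0:
  assumes "skew (A::complex^2^2)" "skew B"
  shows "phi 1 A B = 0"
  using assms skew2_eq_cscale_Jmat phi_cscale_cscale by metis

text \<open>
  \<open>skew4_to_vec5\<close> is the projection \<open>P\<close>: its kernel is \<open>\<complex>J\<close>, and on the complement
  \<open>A$0$2 + A$1$3 = 0\<close> of \<open>\<complex>J\<close> the sum of squares of its coordinates is \<open>4 Pf(A)\<close>.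
  \<open>sym4_to_skew5\<close> is \<open>L\<close>, the isomorphism \<open>sp(4) \<cong> so(5)\<close> in these coordinates.
\<close>

definition skew4_to_vec5 :: "complex^4^4 \<Rightarrow> complex^5" where
  "skew4_to_vec5 A = (\<chi> k. if k = 0 then A$0$1 + A$2$3 else if k = 1 then \<i> * (A$0$1 - A$2$3)
     else if k = 2 then A$0$3 + A$1$2 else if k = 3 then \<i> * (A$0$3 - A$1$2) else A$0$2 - A$1$3)"

definition vec5_to_skew4_upper :: "complex^5 \<Rightarrow> 4 \<Rightarrow> 4 \<Rightarrow> complex" where
  "vec5_to_skew4_upper u i j =
    (if i = 0 \<and> j = 1 then (u$0 - \<i> * u$1) / 2
     else if i = 2 \<and> j = 3 then (u$0 + \<i> * u$1) / 2
     else if i = 0 \<and> j = 3 then (u$2 - \<i> * u$3) / 2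
     else if i = 1 \<and> j = 2 then (u$2 + \<i> * u$3) / 2
     else if i = 0 \<and> j = 2 then u$4 / 2
     else if i = 1 \<and> j = 3 then - u$4 / 2 else 0)"

definition vec5_to_skew4 :: "complex^5 \<Rightarrow> complex^4^4" where
  "vec5_to_skew4 u = (\<chi> i j. vec5_to_skew4_upper u i j - vec5_to_skew4_upper u j i)"

definition sym4_to_skew5_upper :: "complex^4^4 \<Rightarrow> 5 \<Rightarrow> 5 \<Rightarrow> complex" where
  "sym4_to_skew5_upper S i j =
    (if i = 0 \<and> j = 1 then \<i> * (S$0$2 + S$1$3)
     else if i = 0 \<and> j = 2 then (- S$0$0 + S$1$1 - S$2$2 + S$3$3) / 2
     else if i = 0 \<and> j = 3 then \<i> * (- S$0$0 - S$1$1 + S$2$2 + S$3$3) / 2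
     else if i = 0 \<and> j = 4 then S$0$1 + S$2$3
     else if i = 1 \<and> j = 2 then \<i> * (- S$0$0 + S$1$1 + S$2$2 - S$3$3) / 2
     else if i = 1 \<and> j = 3 then (S$0$0 + S$1$1 + S$2$2 + S$3$3) / 2
     else if i = 1 \<and> j = 4 then \<i> * (S$0$1 - S$2$3)
     else if i = 2 \<and> j = 3 then \<i> * (S$0$2 - S$1$3)
     else if i = 2 \<and> j = 4 then S$0$3 - S$1$2
     else if i = 3 \<and> j = 4 then \<i> * (S$0$3 + S$1$2)
     else 0)"

definition sym4_to_skew5 :: "complex^4^4 \<Rightarrow> complex^5^5" where
  "sym4_to_skew5 S = (\<chi> i j. sym4_to_skew5_upper S i j - sym4_to_skew5_upper S j i)"

definition skew5_to_sym4_upper :: "complex^5^5 \<Rightarrow> 4 \<Rightarrow> 4 \<Rightarrow> complex" where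
  "skew5_to_sym4_upper K i j =
    (if i = 0 \<and> j = 0 then (K$1$3 + \<i> * K$0$3 + \<i> * K$1$2 - K$0$2) / 4
     else if i = 1 \<and> j = 1 then (K$1$3 + \<i> * K$0$3 - \<i> * K$1$2 + K$0$2) / 4
     else if i = 2 \<and> j = 2 then (K$1$3 - \<i> * K$0$3 - \<i> * K$1$2 - K$0$2) / 4
     else if i = 3 \<and> j = 3 then (K$1$3 - \<i> * K$0$3 + \<i> * K$1$2 + K$0$2) / 4
     else if i = 0 \<and> j = 2 then - \<i> * (K$0$1 + K$2$3) / 2
     else if i = 1 \<and> j = 3 then - \<i> * (K$0$1 - K$2$3) / 2
     else if i = 0 \<and> j = 1 then (K$0$4 - \<i> * K$1$4) / 2
     else if i = 2 \<and> j = 3 then (K$0$4 + \<i> * K$1$4) / 2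
     else if i = 0 \<and> j = 3 then (K$2$4 - \<i> * K$3$4) / 2
     else if i = 1 \<and> j = 2 then (- \<i> * K$3$4 - K$2$4) / 2
     else 0)"

definition skew5_to_sym4 :: "complex^5^5 \<Rightarrow> complex^4^4" where
  "skew5_to_sym4 K = (\<chi> i j. skew5_to_sym4_upper K i j + skew5_to_sym4_upper K j i)"

lemma skew_vec5_to_skew4: "skew (vec5_to_skew4 u)"
  unfolding skew_def vec5_to_skew4_def by (simp add: vec_eq_iff transpose_def)

lemma skew_sym4_to_skew5: "skew (sym4_to_skew5 S)"
  unfolding skew_def sym4_to_skew5_def by (simp add: vec_eq_iff transpose_def)

lemma symm_skew5_to_sym4: "symm (skew5_to_sym4 K)"
  unfolding symm_def skew5_to_sym4_def by (simp add: vec_eq_iff transpose_def add.commute)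

lemma skew4_to_vec5_vec5_to_skew4: "skew4_to_vec5 (vec5_to_skew4 u) = u"
  by (simp add: skew4_to_vec5_def vec5_to_skew4_def vec5_to_skew4_upper_def vec_eq_iff
      forall_5_from_0 field_simps)

lemma clin_sym4_to_skew5: "clin sym4_to_skew5"
  unfolding clin_def
  by (simp add: sym4_to_skew5_def sym4_to_skew5_upper_def cscale_def vec_eq_iff forall_5_from_0
      field_simps)

lemma skew5_to_sym4_sym4_to_skew5: "symm S \<Longrightarrow> skew5_to_sym4 (sym4_to_skew5 S) = S"
  by (simp add: skew5_to_sym4_def skew5_to_sym4_upper_def sym4_to_skew5_def sym4_to_skew5_upper_def
      vec_eq_iff forall_4_from_0 symm4_entries field_simps)

lemma sym4_to_skew5_skew5_to_sym4: "skew K \<Longrightarrow> sym4_to_skew5 (skew5_to_sym4 K) = K"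
  by (simp add: skew5_to_sym4_def skew5_to_sym4_upper_def sym4_to_skew5_def sym4_to_skew5_upper_def
      vec_eq_iff forall_5_from_0 skew5_entries field_simps)

lemma bij_betw_sym4_to_skew5: "bij_betw sym4_to_skew5 {M. symm M} {M. skew M}"
  by (rule bij_betw_byWitness[where f' = skew5_to_sym4])
     (auto simp: skew5_to_sym4_sym4_to_skew5 sym4_to_skew5_skew5_to_sym4 skew_sym4_to_skew5
        symm_skew5_to_sym4)

lemma sym4_to_skew5_phi:
  assumes "skew A" "skew B"
  shows "sym4_to_skew5 (phi 2 A B) = wedge (skew4_to_vec5 A) (skew4_to_vec5 B)"
  using assms
  by (simp add: phi_def Jmat_2_eq sym4_to_skew5_def sym4_to_skew5_upper_def wedge_def skew4_to_vec5_def
      vec_eq_iff forall_5_from_0 matrix_matrix_mult_def sum_4_from_0 skew4_entries field_simps)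

lemma image_bilinear_through_surjection:
  assumes "\<And>a b. Q a \<Longrightarrow> Q b \<Longrightarrow> L (f a b) = g (P a) (P b)"
    and "\<And>u. \<exists>a. Q a \<and> P a = u"
  shows "L ` {f a b | a b. Q a \<and> Q b} = {g u v | u v. True}"
proof (intro equalityI subsetI)
  fix x
  assume "x \<in> {g u v | u v. True}"
  then obtain u v where x: "x = g u v" by blast
  obtain a b where "Q a" "P a = u" "Q b" "P b = v"
    using assms(2) by metis
  then have "x = L (f a b)"
    by (simp add: x assms(1))
  with \<open>Q a\<close> \<open>Q b\<close> show "x \<in> L ` {f a b | a b. Q a \<and> Q b}" by blast
qed (use assms(1) in blast)

theorem mainTheorem12:
  shows "(\<forall>A B :: complex^2^2. skew A \<longrightarrow> skew B \<longrightarrow> phi 1 A B = 0)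
    \<and> (\<exists>L :: complex^4^4 \<Rightarrow> complex^5^5.
          clin L \<and> bij_betw L {M. symm M} {M. skew M} \<and>
          L ` {phi 2 A B | A B :: complex^4^4. skew A \<and> skew B}
            = {wedge u v | u v :: complex^5. True})"
proof (intro conjI allI impI exI)
  show "phi 1 A B = 0" if "skew A" "skew B" for A B :: "complex^2^2"
    using that by (rule phi_1_skew_eq_0)
  show "clin sym4_to_skew5" by (rule clin_sym4_to_skew5)
  show "bij_betw sym4_to_skew5 {M. symm M} {M. skew M}" by (rule bij_betw_sym4_to_skew5)
  have onto: "\<exists>A. skew A \<and> skew4_to_vec5 A = u" for u
    using skew_vec5_to_skew4 skew4_to_vec5_vec5_to_skew4 by blast
  show "sym4_to_skew5 ` {phi 2 A B | A B :: complex^4^4. skew A \<and> skew B}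
      = {wedge u v | u v :: complex^5. True}"
    by (rule image_bilinear_through_surjection[where P = skew4_to_vec5])
       (simp_all add: sym4_to_skew5_phi onto)
qed

end
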